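(* Let $(S,\mathcal{A},\mu)$ be a complete, $\sigma$-finite measure space and $X$ an octahedral real Banach space. Then $L^1(\mu,X)$ and $L^\infty(\mu,X)$ are also octahedral.
   Context: A real Banach space $X$ is octahedral if for every finite-dimensional subspace $F$ of $X$ and every $\varepsilon>0$ there is $y\in S_X$ (the unit sphere) with $\|x+y\|\ge(1-\varepsilon)(\|x\|+1)$ for all $x\in F$. $L^1(\mu,X)$, $L^\infty(\mu,X)$ are the Lebesgue–Bochner spaces. *)

theory Defs
  imports "HOL-Analysis.Analysis" "HOL-Probability.Essential_Supremum"
begin

text \<open>Octahedrality of a real normed space, given as a type.
  Finite-dimensional subspaces are exactly the spans of finite sets.\<close>
definition octahedral :: "'b::real_normed_vector itself \<Rightarrow> bool" where
  "octahedral _ \<longleftrightarrow>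
     (\<forall>B::'b set. finite B \<longrightarrow> (\<forall>\<epsilon>>0. \<exists>y. norm y = 1 \<and>
        (\<forall>x\<in>span B. norm (x + y) \<ge> (1 - \<epsilon>) * (norm x + 1))))"

text \<open>Octahedrality of a function space V (a real vector space of functions under
  pointwise operations) with seminorm N; this is octahedrality of the normed quotient
  V / ker N (e.g. the space of a.e.-equivalence classes). A finite-dimensional subspace
  of the quotient is spanned by the classes of finitely many elements of V.\<close>
definition octahedral_fs :: "('a \<Rightarrow> 'b::real_normed_vector) set \<Rightarrow> (('a \<Rightarrow> 'b) \<Rightarrow> real) \<Rightarrow> bool" where
  "octahedral_fs V N \<longleftrightarrow>
     (\<forall>B. finite B \<and> B \<subseteq> V \<longrightarrow> (\<forall>\<epsilon>>0. \<exists>y\<in>V. N y = 1 \<and>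
        (\<forall>c :: ('a \<Rightarrow> 'b) \<Rightarrow> real.
           N (\<lambda>s. (\<Sum>f\<in>B. c f *\<^sub>R f s) + y s)
             \<ge> (1 - \<epsilon>) * (N (\<lambda>s. \<Sum>f\<in>B. c f *\<^sub>R f s) + 1))))"

definition strongly_measurable :: "'a measure \<Rightarrow> ('a \<Rightarrow> 'b::real_normed_vector) \<Rightarrow> bool" where
  "strongly_measurable M f \<longleftrightarrow>
     (\<exists>s. (\<forall>n. simple_function M (s n)) \<and> (AE x in M. (\<lambda>n. s n x) \<longlonglongrightarrow> f x))"

text \<open>Defined directly
  rather than via the library's integrable, which requires X second countable (separable).\<close>
definition L1_space :: "'a measure \<Rightarrow> ('a \<Rightarrow> 'b::real_normed_vector) set" where
  "L1_space M = {f. strongly_measurable M f \<and> (\<integral>\<^sup>+ x. ennreal (norm (f x)) \<partial>M) < \<infinity>}"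

definition L1_norm :: "'a measure \<Rightarrow> ('a \<Rightarrow> 'b::real_normed_vector) \<Rightarrow> real" where
  "L1_norm M f = enn2real (\<integral>\<^sup>+ x. ennreal (norm (f x)) \<partial>M)"

definition Linf_space :: "'a measure \<Rightarrow> ('a \<Rightarrow> 'b::real_normed_vector) set" where
  "Linf_space M = {f. strongly_measurable M f \<and> esssup M (\<lambda>x. ereal (norm (f x))) < \<infinity>}"

definition Linf_norm :: "'a measure \<Rightarrow> ('a \<Rightarrow> 'b::real_normed_vector) \<Rightarrow> real" where
  "Linf_norm M f = real_of_ereal (esssup M (\<lambda>x. ereal (norm (f x))))"

end

theory Submission
  imports Defs
begin

text \<open>
  Given finitely many Bochner functions g, approximate them a.e. within \<delta> by countably-valued
  functions, so that near each point s the values g s are replaced by a finite family t in X.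
  Octahedrality of X yields a unit vector y(t) that is almost octahedral for the span of t.
  In L\<infinity> the function s \<mapsto> y(t) works directly; in L1 one takes y(t) / \<mu>(A) on a set A
  of positive finite measure on which t is constant. The approximation error is at most
  \<delta> times the l1-norm of the coefficients, which is controlled by the seminorm of the
  combination because norms on the finite-dimensional span (modulo null functions) are
  equivalent; that equivalence is proved by induction on the number of generators, together
  with the closedness of their span.
\<close>

section \<open>Finite-dimensional subspaces of seminormed function spaces\<close>

definition lin_comb :: "('a \<Rightarrow> 'b::real_vector) set \<Rightarrow> (('a \<Rightarrow> 'b) \<Rightarrow> real) \<Rightarrow> 'a \<Rightarrow> 'b" where
  "lin_comb B c = (\<lambda>s. \<Sum>g\<in>B. c g *\<^sub>R g s)"

lemma lin_comb_empty [simp]: "lin_comb {} c = (\<lambda>s. 0)"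
  by (simp add: lin_comb_def)

lemma lin_comb_insert:
  "finite B \<Longrightarrow> h \<notin> B \<Longrightarrow> lin_comb (insert h B) c = (\<lambda>s. c h *\<^sub>R h s + lin_comb B c s)"
  by (simp add: lin_comb_def)

lemma lin_comb_fun_upd: "h \<notin> B \<Longrightarrow> lin_comb B (c(h := v)) = lin_comb B c"
  unfolding lin_comb_def by (intro ext sum.cong) auto

lemma lin_comb_insert_fun_upd:
  "finite B \<Longrightarrow> h \<notin> B \<Longrightarrow> lin_comb (insert h B) (c(h := v)) = (\<lambda>s. v *\<^sub>R h s + lin_comb B c s)"
  by (simp add: lin_comb_insert lin_comb_fun_upd)

lemma lin_comb_add_scaled:
  "lin_comb B (\<lambda>g. c g + a * d g) = (\<lambda>s. lin_comb B c s + a *\<^sub>R lin_comb B d s)"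
  by (simp add: lin_comb_def scaleR_add_left sum.distrib scaleR_sum_right)

lemma lin_comb_scaled: "lin_comb B (\<lambda>g. a * c g) = (\<lambda>s. a *\<^sub>R lin_comb B c s)"
  by (simp add: lin_comb_def scaleR_sum_right)

lemma norm_lin_comb_diff_le:
  fixes t :: "('a \<Rightarrow> 'b::real_normed_vector) \<Rightarrow> 'b"
  assumes "\<forall>g\<in>B. norm (g s - t g) \<le> \<delta>"
  shows "norm (lin_comb B c s - (\<Sum>g\<in>B. c g *\<^sub>R t g)) \<le> (\<Sum>g\<in>B. \<bar>c g\<bar>) * \<delta>"
proof -
  have "lin_comb B c s - (\<Sum>g\<in>B. c g *\<^sub>R t g) = (\<Sum>g\<in>B. c g *\<^sub>R (g s - t g))"
    unfolding lin_comb_def by (simp add: sum_subtractf scaleR_diff_right)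
  also have "norm \<dots> \<le> (\<Sum>g\<in>B. \<bar>c g\<bar> * \<delta>)"
    using assms by (intro order_trans[OF norm_sum] sum_mono) (simp add: mult_left_mono)
  finally show ?thesis
    by (simp add: sum_distrib_right)
qed

locale seminormed_function_space =
  fixes V :: "('a \<Rightarrow> 'b::real_normed_vector) set" and N :: "('a \<Rightarrow> 'b) \<Rightarrow> real"
  assumes zero_mem: "(\<lambda>s. 0) \<in> V"
    and add_mem: "u \<in> V \<Longrightarrow> v \<in> V \<Longrightarrow> (\<lambda>s. u s + v s) \<in> V"
    and scaleR_mem: "u \<in> V \<Longrightarrow> (\<lambda>s. a *\<^sub>R u s) \<in> V"
    and nonneg: "u \<in> V \<Longrightarrow> N u \<ge> 0"
    and triangle: "u \<in> V \<Longrightarrow> v \<in> V \<Longrightarrow> N (\<lambda>s. u s + v s) \<le> N u + N v"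
    and homogeneous: "u \<in> V \<Longrightarrow> N (\<lambda>s. a *\<^sub>R u s) = \<bar>a\<bar> * N u"
begin

lemma diff_mem: "u \<in> V \<Longrightarrow> v \<in> V \<Longrightarrow> (\<lambda>s. u s - v s) \<in> V"
  using add_mem[of u "\<lambda>s. (-1) *\<^sub>R v s"] scaleR_mem[of v "-1"] by simp

lemma lin_comb_mem: "finite B \<Longrightarrow> B \<subseteq> V \<Longrightarrow> lin_comb B c \<in> V"
proof (induction B rule: finite_induct)
  case (insert h B)
  then show ?case
    using add_mem[OF scaleR_mem[of h "c h"], of "lin_comb B c"] by (simp add: lin_comb_insert)
qed (simp add: zero_mem)

lemma N_zero: "N (\<lambda>s. 0) = 0"
  using homogeneous[OF zero_mem, of 0] by simp

lemma triangle_diff: "u \<in> V \<Longrightarrow> v \<in> V \<Longrightarrow> N (\<lambda>s. u s - v s) \<le> N u + N v"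
  using triangle[of u "\<lambda>s. (-1) *\<^sub>R v s"] scaleR_mem[of v "-1"] homogeneous[of v "-1"] by simp

lemma N_diff_commute: "u \<in> V \<Longrightarrow> v \<in> V \<Longrightarrow> N (\<lambda>s. u s - v s) = N (\<lambda>s. v s - u s)"
  using homogeneous[OF diff_mem[of v u], of "-1"] by simp

lemma reverse_triangle: "u \<in> V \<Longrightarrow> v \<in> V \<Longrightarrow> N u \<le> N v + N (\<lambda>s. u s - v s)"
  using triangle[OF _ diff_mem[of u v], of v] by (simp add: add.commute)

lemma triangle_diff3:
  "u \<in> V \<Longrightarrow> v \<in> V \<Longrightarrow> w \<in> V \<Longrightarrow> N (\<lambda>s. u s - w s) \<le> N (\<lambda>s. u s - v s) + N (\<lambda>s. v s - w s)"
  using triangle[OF diff_mem[of u v] diff_mem[of v w]] by simp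

lemma N_eq_if_null_diff:
  assumes "u \<in> V" "v \<in> V" "N (\<lambda>s. u s - v s) = 0"
  shows "N u = N v"
  using reverse_triangle[of u v] reverse_triangle[of v u] N_diff_commute[of u v] assms by simp

definition in_span_mod_null :: "('a \<Rightarrow> 'b) set \<Rightarrow> ('a \<Rightarrow> 'b) \<Rightarrow> bool" where
  "in_span_mod_null B h \<longleftrightarrow> (\<exists>c. N (\<lambda>s. h s - lin_comb B c s) = 0)"

definition in_span_closure :: "('a \<Rightarrow> 'b) set \<Rightarrow> ('a \<Rightarrow> 'b) \<Rightarrow> bool" where
  "in_span_closure B h \<longleftrightarrow> (\<forall>e>0. \<exists>c. N (\<lambda>s. h s - lin_comb B c s) < e)"

definition span_closed :: "('a \<Rightarrow> 'b) set \<Rightarrow> bool" where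
  "span_closed B \<longleftrightarrow> (\<forall>h\<in>V. in_span_closure B h \<longrightarrow> in_span_mod_null B h)"

definition coefficient_bound :: "('a \<Rightarrow> 'b) set \<Rightarrow> real \<Rightarrow> bool" where
  "coefficient_bound B K \<longleftrightarrow>
     (\<forall>c. \<exists>c'. N (\<lambda>s. lin_comb B c s - lin_comb B c' s) = 0 \<and>
               (\<Sum>g\<in>B. \<bar>c' g\<bar>) \<le> K * N (lin_comb B c))"


lemma null_diff_insert_redundant:
  assumes B: "finite B" "B \<subseteq> V" "h0 \<notin> B" and h0: "h0 \<in> V"
    and d: "N (\<lambda>s. h0 s - lin_comb B d s) = 0"
  shows "N (\<lambda>s. lin_comb (insert h0 B) c s - lin_comb B (\<lambda>g. c g + c h0 * d g) s) = 0"
proof -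
  have "(\<lambda>s. lin_comb (insert h0 B) c s - lin_comb B (\<lambda>g. c g + c h0 * d g) s)
      = (\<lambda>s. c h0 *\<^sub>R (h0 s - lin_comb B d s))"
    using B by (auto simp: lin_comb_insert lin_comb_add_scaled algebra_simps)
  then show ?thesis
    using homogeneous[OF diff_mem[OF h0 lin_comb_mem[OF B(1,2)]], of "c h0"] d by simp
qed

lemma coefficient_bound_insert_redundant:
  assumes B: "finite B" "B \<subseteq> V" "h0 \<notin> B" and h0: "h0 \<in> V"
    and d: "N (\<lambda>s. h0 s - lin_comb B d s) = 0" and K: "coefficient_bound B K"
  shows "coefficient_bound (insert h0 B) K"
  unfolding coefficient_bound_def
proof
  fix c
  let ?f = "lin_comb (insert h0 B) c" and ?c1 = "\<lambda>g. c g + c h0 * d g"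
  have fV: "?f \<in> V" and BV: "\<And>c. lin_comb B c \<in> V"
    using B h0 by (auto intro: lin_comb_mem)
  obtain c2 where c2: "N (\<lambda>s. lin_comb B ?c1 s - lin_comb B c2 s) = 0"
    "(\<Sum>g\<in>B. \<bar>c2 g\<bar>) \<le> K * N (lin_comb B ?c1)"
    using K unfolding coefficient_bound_def by blast
  have f_c1: "N (\<lambda>s. ?f s - lin_comb B ?c1 s) = 0"
    by (rule null_diff_insert_redundant[OF B h0 d])
  have "N (\<lambda>s. ?f s - lin_comb B c2 s) = 0"
    using triangle_diff3[of ?f "lin_comb B ?c1" "lin_comb B c2"] fV BV f_c1 c2(1) nonneg[OF diff_mem[OF fV BV]]
    by (simp add: order_antisym)
  moreover have "N (lin_comb B ?c1) = N ?f"
    using N_eq_if_null_diff[OF fV BV f_c1] by simp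
  moreover have "(\<Sum>g\<in>insert h0 B. \<bar>(c2(h0 := 0)) g\<bar>) = (\<Sum>g\<in>B. \<bar>c2 g\<bar>)"
    using B by (simp add: sum.insert) (intro sum.cong, auto)
  ultimately show "\<exists>c'. N (\<lambda>s. ?f s - lin_comb (insert h0 B) c' s) = 0 \<and>
      (\<Sum>g\<in>insert h0 B. \<bar>c' g\<bar>) \<le> K * N ?f"
    using c2(2) B by (intro exI[of _ "c2(h0 := 0)"]) (simp add: lin_comb_insert_fun_upd)
qed

lemma span_closed_insert_redundant:
  assumes B: "finite B" "B \<subseteq> V" "h0 \<notin> B" and h0: "h0 \<in> V"
    and d: "N (\<lambda>s. h0 s - lin_comb B d s) = 0" and closed: "span_closed B"
  shows "span_closed (insert h0 B)"
  unfolding span_closed_def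
proof (intro ballI impI)
  fix h assume hV: "h \<in> V" and h: "in_span_closure (insert h0 B) h"
  have "in_span_closure B h"
    unfolding in_span_closure_def
  proof (intro allI impI)
    fix e :: real assume "e > 0"
    then obtain c where c: "N (\<lambda>s. h s - lin_comb (insert h0 B) c s) < e"
      using h unfolding in_span_closure_def by blast
    let ?c1 = "\<lambda>g. c g + c h0 * d g"
    have "N (\<lambda>s. h s - lin_comb B ?c1 s)
        \<le> N (\<lambda>s. h s - lin_comb (insert h0 B) c s) + N (\<lambda>s. lin_comb (insert h0 B) c s - lin_comb B ?c1 s)"
      using B h0 hV by (intro triangle_diff3) (auto intro: lin_comb_mem)
    then show "\<exists>c. N (\<lambda>s. h s - lin_comb B c s) < e"
      using c null_diff_insert_redundant[OF B h0 d, of c] by (intro exI[of _ ?c1]) simp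
  qed
  then obtain c where "N (\<lambda>s. h s - lin_comb B c s) = 0"
    using closed hV unfolding span_closed_def in_span_mod_null_def by blast
  then show "in_span_mod_null (insert h0 B) h"
    unfolding in_span_mod_null_def using B
    by (intro exI[of _ "c(h0 := 0)"]) (simp add: lin_comb_insert_fun_upd)
qed

lemma dist_to_span_pos:
  assumes B: "finite B" "B \<subseteq> V" and h0: "h0 \<in> V"
    and closed: "span_closed B" and indep: "\<not> in_span_mod_null B h0"
  obtains \<delta> where "\<delta> > 0" "\<And>t c. \<bar>t\<bar> * \<delta> \<le> N (\<lambda>s. t *\<^sub>R h0 s + lin_comb B c s)"
proof -
  have BV: "\<And>c. lin_comb B c \<in> V"
    using B by (rule lin_comb_mem)
  have "\<not> in_span_closure B h0"
    using closed h0 indep unfolding span_closed_def by blast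
  then obtain \<delta> where \<delta>: "\<delta> > 0" "\<And>d. \<delta> \<le> N (\<lambda>s. h0 s - lin_comb B d s)"
    unfolding in_span_closure_def by (auto simp: not_less)
  have "\<bar>t\<bar> * \<delta> \<le> N (\<lambda>s. t *\<^sub>R h0 s + lin_comb B c s)" for t c
  proof (cases "t = 0")
    case True
    then show ?thesis using nonneg[OF BV] by simp
  next
    case False
    have "(\<lambda>s. t *\<^sub>R h0 s + lin_comb B c s)
        = (\<lambda>s. t *\<^sub>R (h0 s - lin_comb B (\<lambda>g. (- 1 / t) * c g) s))"
      unfolding lin_comb_scaled using False by (auto simp: algebra_simps)
    then show ?thesis
      using homogeneous[OF diff_mem[OF h0 BV]] \<delta>(2) by (simp add: mult_left_mono)
  qed
  with \<delta>(1) that show ?thesis by blast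
qed


lemma coefficient_bound_insert_independent:
  assumes B: "finite B" "B \<subseteq> V" "h0 \<notin> B" and h0: "h0 \<in> V"
    and \<delta>: "\<delta> > 0" "\<And>t c. \<bar>t\<bar> * \<delta> \<le> N (\<lambda>s. t *\<^sub>R h0 s + lin_comb B c s)"
    and K: "K \<ge> 0" "coefficient_bound B K"
  shows "coefficient_bound (insert h0 B) (1 / \<delta> + K * (1 + N h0 / \<delta>))"
  unfolding coefficient_bound_def
proof
  fix c
  let ?f = "lin_comb (insert h0 B) c"
  have f: "?f = (\<lambda>s. c h0 *\<^sub>R h0 s + lin_comb B c s)"
    using B by (simp add: lin_comb_insert)
  have fV: "?f \<in> V"
    using B h0 by (intro lin_comb_mem) auto
  have Nh0: "N h0 \<ge> 0" and Nf: "N ?f \<ge> 0"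
    using h0 fV by (auto intro: nonneg)
  have "\<bar>c h0\<bar> * \<delta> \<le> N ?f"
    using \<delta>(2)[of "c h0" c] f by simp
  then have coeff_h0: "\<bar>c h0\<bar> \<le> N ?f / \<delta>"
    using \<delta>(1) by (simp add: field_simps)
  have "lin_comb B c = (\<lambda>s. ?f s + (- c h0) *\<^sub>R h0 s)"
    using f by auto
  then have "N (lin_comb B c) \<le> N ?f + \<bar>c h0\<bar> * N h0"
    using triangle[OF fV scaleR_mem[OF h0, of "- c h0"]] homogeneous[OF h0, of "- c h0"] by simp
  also have "\<dots> \<le> N ?f * (1 + N h0 / \<delta>)"
    using mult_right_mono[OF coeff_h0 Nh0] by (simp add: algebra_simps)
  finally have NB: "N (lin_comb B c) \<le> N ?f * (1 + N h0 / \<delta>)" .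
  obtain c2 where c2: "N (\<lambda>s. lin_comb B c s - lin_comb B c2 s) = 0"
    "(\<Sum>g\<in>B. \<bar>c2 g\<bar>) \<le> K * N (lin_comb B c)"
    using K(2) unfolding coefficient_bound_def by blast
  have "(\<lambda>s. ?f s - lin_comb (insert h0 B) (c2(h0 := c h0)) s) = (\<lambda>s. lin_comb B c s - lin_comb B c2 s)"
    using f B by (simp add: lin_comb_insert_fun_upd)
  moreover have "(\<Sum>g\<in>insert h0 B. \<bar>(c2(h0 := c h0)) g\<bar>) = \<bar>c h0\<bar> + (\<Sum>g\<in>B. \<bar>c2 g\<bar>)"
    using B by (simp add: sum.insert) (intro sum.cong, auto)
  moreover have "\<bar>c h0\<bar> + (\<Sum>g\<in>B. \<bar>c2 g\<bar>) \<le> (1 / \<delta> + K * (1 + N h0 / \<delta>)) * N ?f"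
  proof -
    have "K * N (lin_comb B c) \<le> K * (N ?f * (1 + N h0 / \<delta>))"
      using NB K(1) by (rule mult_left_mono)
    then show ?thesis
      using coeff_h0 c2(2) by (simp add: algebra_simps)
  qed
  ultimately show "\<exists>c'. N (\<lambda>s. ?f s - lin_comb (insert h0 B) c' s) = 0 \<and>
      (\<Sum>g\<in>insert h0 B. \<bar>c' g\<bar>) \<le> (1 / \<delta> + K * (1 + N h0 / \<delta>)) * N ?f"
    using c2(1) by (intro exI[of _ "c2(h0 := c h0)"]) simp
qed

text \<open>The h0-coefficients of approximating combinations form a Cauchy sequence, since h0
  stays at distance at least \<delta> from the span of B; its limit t0 reduces the claim to the
  closedness of that span for h - t0 h0.\<close>
lemma span_closed_insert_independent:
  assumes B: "finite B" "B \<subseteq> V" "h0 \<notin> B" and h0: "h0 \<in> V"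
    and \<delta>: "\<delta> > 0" "\<And>t c. \<bar>t\<bar> * \<delta> \<le> N (\<lambda>s. t *\<^sub>R h0 s + lin_comb B c s)"
    and closed: "span_closed B"
  shows "span_closed (insert h0 B)"
  unfolding span_closed_def
proof (intro ballI impI)
  fix h assume hV: "h \<in> V" and h: "in_span_closure (insert h0 B) h"
  let ?r = "\<lambda>c s. h s - lin_comb (insert h0 B) c s"
  have lcI: "\<And>c. lin_comb (insert h0 B) c = (\<lambda>s. c h0 *\<^sub>R h0 s + lin_comb B c s)"
    using B by (simp add: lin_comb_insert)
  have rV: "?r c \<in> V" for c
    using B h0 hV by (intro diff_mem lin_comb_mem) auto
  have "\<forall>k. \<exists>c. N (?r c) < 1 / Suc k"
    using h unfolding in_span_closure_def by simp
  then obtain cs where cs: "\<And>k. N (?r (cs k)) < 1 / Suc k"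
    by metis
  define t where "t k = cs k h0" for k
  have t_close: "\<bar>t m - t n\<bar> * \<delta> < 1 / Suc m + 1 / Suc n" for m n
  proof -
    have "(\<lambda>s. (t m - t n) *\<^sub>R h0 s + lin_comb B (\<lambda>g. cs m g + (-1) * cs n g) s) = (\<lambda>s. ?r (cs n) s - ?r (cs m) s)"
      unfolding lin_comb_add_scaled lcI t_def by (auto simp: algebra_simps)
    then have "\<bar>t m - t n\<bar> * \<delta> \<le> N (\<lambda>s. ?r (cs n) s - ?r (cs m) s)"
      using \<delta>(2)[of "t m - t n" "\<lambda>g. cs m g + (-1) * cs n g"] by simp
    also have "\<dots> \<le> N (?r (cs n)) + N (?r (cs m))"
      by (rule triangle_diff[OF rV rV])
    finally show ?thesis
      using cs[of m] cs[of n] by simp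
  qed
  have "Cauchy t"
  proof (rule metric_CauchyI)
    fix e :: real assume "e > 0"
    then obtain M where M: "1 / real (Suc M) < e * \<delta> / 2"
      using reals_Archimedean[of "e * \<delta> / 2"] \<delta>(1) by (auto simp: inverse_eq_divide)
    have "dist (t m) (t n) < e" if "m \<ge> M" "n \<ge> M" for m n
    proof -
      have "1 / real (Suc m) \<le> 1 / real (Suc M)" "1 / real (Suc n) \<le> 1 / real (Suc M)"
        using that by (auto intro!: divide_left_mono)
      with t_close[of m n] M have "\<bar>t m - t n\<bar> * \<delta> < e * \<delta>"
        by linarith
      with \<delta>(1) show ?thesis
        by (simp add: dist_real_def)
    qed
    then show "\<exists>M. \<forall>m\<ge>M. \<forall>n\<ge>M. dist (t m) (t n) < e"
      by blast
  qed
  then obtain t0 where t0: "t \<longlonglongrightarrow> t0"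
    using Cauchy_convergent_iff convergent_def by blast
  define h' where "h' = (\<lambda>s. h s - t0 *\<^sub>R h0 s)"
  have h'V: "h' \<in> V"
    unfolding h'_def using diff_mem[OF hV scaleR_mem[OF h0]] .
  have "in_span_closure B h'"
    unfolding in_span_closure_def
  proof (intro allI impI)
    fix e :: real assume e: "e > 0"
    have "(\<lambda>k. \<bar>t k - t0\<bar> * N h0 + 1 / real (Suc k)) \<longlonglongrightarrow> 0 * N h0 + 0"
      by (intro tendsto_intros LIMSEQ_Suc[OF lim_inverse_n'] t0[THEN LIM_zero, THEN tendsto_rabs_zero])
    then obtain k where k: "\<bar>t k - t0\<bar> * N h0 + 1 / real (Suc k) < e"
      using e order_tendstoD(2) eventually_sequentially by force
    have "(\<lambda>s. h' s - lin_comb B (cs k) s) = (\<lambda>s. ?r (cs k) s + (t k - t0) *\<^sub>R h0 s)"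
      unfolding h'_def lcI t_def by (auto simp: algebra_simps)
    then have "N (\<lambda>s. h' s - lin_comb B (cs k) s) \<le> N (?r (cs k)) + \<bar>t k - t0\<bar> * N h0"
      using triangle[OF rV scaleR_mem[OF h0]] homogeneous[OF h0] by simp
    then show "\<exists>c. N (\<lambda>s. h' s - lin_comb B c s) < e"
      using cs[of k] k by (intro exI[of _ "cs k"]) simp
  qed
  then obtain d where "N (\<lambda>s. h' s - lin_comb B d s) = 0"
    using closed h'V unfolding span_closed_def in_span_mod_null_def by blast
  moreover have "(\<lambda>s. h s - lin_comb (insert h0 B) (d(h0 := t0)) s) = (\<lambda>s. h' s - lin_comb B d s)"
    unfolding h'_def using B by (auto simp: lin_comb_insert_fun_upd algebra_simps)
  ultimately show "in_span_mod_null (insert h0 B) h"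
    unfolding in_span_mod_null_def by metis
qed

lemma span_closed_and_coefficient_bound:
  assumes "finite B" "B \<subseteq> V"
  shows "span_closed B \<and> (\<exists>K\<ge>0. coefficient_bound B K)"
  using assms
proof (induction B rule: finite_induct)
  case empty
  have "span_closed {}"
    unfolding span_closed_def in_span_closure_def in_span_mod_null_def
  proof (intro ballI impI)
    fix h assume "h \<in> V" "\<forall>e>0. \<exists>c. N (\<lambda>s. h s - lin_comb {} c s) < e"
    then have "N h \<ge> 0" "\<forall>e>0. N h < e"
      by (auto intro: nonneg)
    then show "\<exists>c. N (\<lambda>s. h s - lin_comb {} c s) = 0"
      by (simp add: order_le_less) (meson less_irrefl)
  qed
  moreover have "coefficient_bound {} 0"
    unfolding coefficient_bound_def by (simp add: N_zero)
  ultimately show ?case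
    by blast
next
  case (insert h0 B)
  then have B: "finite B" "B \<subseteq> V" "h0 \<notin> B" and h0: "h0 \<in> V"
    by auto
  obtain K where closed: "span_closed B" and K: "K \<ge> 0" "coefficient_bound B K"
    using insert.IH B(2) by blast
  show ?case
  proof (cases "in_span_mod_null B h0")
    case True
    then obtain d where "N (\<lambda>s. h0 s - lin_comb B d s) = 0"
      unfolding in_span_mod_null_def by blast
    then show ?thesis
      using span_closed_insert_redundant[OF B h0 _ closed] coefficient_bound_insert_redundant[OF B h0 _ K(2)] K(1)
      by blast
  next
    case False
    then obtain \<delta> where \<delta>: "\<delta> > 0" "\<And>t c. \<bar>t\<bar> * \<delta> \<le> N (\<lambda>s. t *\<^sub>R h0 s + lin_comb B c s)"
      using dist_to_span_pos[OF B(1,2) h0 closed] by blast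
    have "1 / \<delta> + K * (1 + N h0 / \<delta>) \<ge> 0"
      using \<delta>(1) K(1) nonneg[OF h0] by simp
    then show ?thesis
      using span_closed_insert_independent[OF B h0 \<delta> closed] coefficient_bound_insert_independent[OF B h0 \<delta> K]
      by blast
  qed
qed


text \<open>The coefficient bound turns an error proportional to the l1-norm of the coefficients
  into one proportional to the seminorm.\<close>
lemma octahedral_fs_if_approximately_octahedral:
  assumes approx: "\<And>B \<epsilon>. finite B \<Longrightarrow> B \<subseteq> V \<Longrightarrow> 0 < \<epsilon> \<Longrightarrow> \<epsilon> \<le> 1 \<Longrightarrow>
      \<exists>y\<in>V. N y = 1 \<and> (\<forall>c. (1 - \<epsilon>) * (N (lin_comb B c) + 1) - \<epsilon> * (\<Sum>g\<in>B. \<bar>c g\<bar>)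
                                \<le> N (\<lambda>s. lin_comb B c s + y s))"
  shows "octahedral_fs V N"
  unfolding octahedral_fs_def
proof (intro allI impI)
  fix B :: "('a \<Rightarrow> 'b) set" and \<epsilon> :: real
  assume "finite B \<and> B \<subseteq> V" and \<epsilon>: "\<epsilon> > 0"
  then have B: "finite B" "B \<subseteq> V"
    by auto
  obtain K where K: "K \<ge> 0" "coefficient_bound B K"
    using span_closed_and_coefficient_bound[OF B] by blast
  define \<epsilon>1 where "\<epsilon>1 = min \<epsilon> 1"
  define \<eta> where "\<eta> = \<epsilon>1 / (2 * (K + 1))"
  have \<epsilon>1: "0 < \<epsilon>1" "\<epsilon>1 \<le> 1" "\<epsilon>1 \<le> \<epsilon>"
    using \<epsilon> by (auto simp: \<epsilon>1_def)
  have \<eta>: "0 < \<eta>" "\<eta> \<le> \<epsilon>1 / 2" "\<eta> * K \<le> \<epsilon>1 / 2"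
    using \<epsilon>1 K(1) by (auto simp: \<eta>_def field_simps)
  obtain y where y: "y \<in> V" "N y = 1"
    and y_est: "\<And>c. (1 - \<eta>) * (N (lin_comb B c) + 1) - \<eta> * (\<Sum>g\<in>B. \<bar>c g\<bar>)
                       \<le> N (\<lambda>s. lin_comb B c s + y s)"
    using approx[OF B \<eta>(1)] \<eta>(2) \<epsilon>1(2) by fastforce
  have "(1 - \<epsilon>) * (N (lin_comb B c) + 1) \<le> N (\<lambda>s. lin_comb B c s + y s)" for c
  proof -
    let ?f = "lin_comb B c"
    have BV: "\<And>c. lin_comb B c \<in> V"
      using B by (rule lin_comb_mem)
    obtain c' where c': "N (\<lambda>s. ?f s - lin_comb B c' s) = 0" "(\<Sum>g\<in>B. \<bar>c' g\<bar>) \<le> K * N ?f"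
      using K(2) unfolding coefficient_bound_def by blast
    have "N (\<lambda>s. lin_comb B c' s + y s) = N (\<lambda>s. ?f s + y s)"
      using c'(1) N_diff_commute[OF BV BV, of c c'] by (intro N_eq_if_null_diff add_mem BV y(1)) simp_all
    moreover have "N (lin_comb B c') = N ?f"
      using c'(1) N_diff_commute[OF BV BV, of c c'] by (intro N_eq_if_null_diff BV) simp
    moreover have "\<eta> * (\<Sum>g\<in>B. \<bar>c' g\<bar>) \<le> \<epsilon>1 / 2 * N ?f"
      using mult_left_mono[OF c'(2) less_imp_le[OF \<eta>(1)]] mult_right_mono[OF \<eta>(3) nonneg[OF BV, of c]]
      by (simp add: mult.assoc)
    moreover have "\<eta> * (N ?f + 1) \<le> \<epsilon>1 / 2 * (N ?f + 1)"
      using \<eta>(2) nonneg[OF BV] by (intro mult_right_mono) auto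
    moreover have "\<epsilon>1 * (N ?f + 1) \<le> \<epsilon> * (N ?f + 1)"
      using \<epsilon>1(3) nonneg[OF BV] by (intro mult_right_mono) auto
    ultimately show ?thesis
      using y_est[of c'] \<epsilon>1(1) by (simp add: algebra_simps)
  qed
  then show "\<exists>y\<in>V. N y = 1 \<and> (\<forall>c. (1 - \<epsilon>) * (N (\<lambda>s. \<Sum>f\<in>B. c f *\<^sub>R f s) + 1)
                                  \<le> N (\<lambda>s. (\<Sum>f\<in>B. c f *\<^sub>R f s) + y s))"
    using y unfolding lin_comb_def by blast
qed

end

section \<open>Almost octahedral directions\<close>

lemma octahedralD:
  fixes S :: "'b::real_normed_vector set"
  assumes "octahedral TYPE('b)" "finite S" "\<epsilon> > 0"
  obtains y :: "'b" where "norm y = 1" "\<forall>x\<in>span S. (1 - \<epsilon>) * (norm x + 1) \<le> norm (x + y)"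
  using assms unfolding octahedral_def by blast

lemma octahedral_direction_scaled:
  fixes y :: "'b::real_normed_vector"
  assumes y: "\<forall>x\<in>span S. (1 - \<eta>) * (norm x + 1) \<le> norm (x + y)" and x: "x \<in> span S" and r: "r > 0"
  shows "(1 - \<eta>) * (norm x + r) \<le> norm (x + r *\<^sub>R y)"
proof -
  have "(1 - \<eta>) * (norm x / r + 1) \<le> norm ((1 / r) *\<^sub>R x + y)"
    using y span_mul[OF x, of "1 / r"] r by auto
  then have "r * ((1 - \<eta>) * (norm x / r + 1)) \<le> r * norm ((1 / r) *\<^sub>R x + y)"
    using r by (intro mult_left_mono) auto
  moreover have "norm (x + r *\<^sub>R y) = r * norm ((1 / r) *\<^sub>R x + y)"
    using r by (simp add: algebra_simps flip: norm_scaleR[of r, unfolded abs_of_pos[OF r]])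
  moreover have "r * ((1 - \<eta>) * (norm x / r + 1)) = (1 - \<eta>) * (norm x + r)"
    using r by (simp add: field_simps)
  ultimately show ?thesis
    by simp
qed

lemma norm_lin_comb_add_octahedral:
  fixes y :: "'b::real_normed_vector" and t :: "('a \<Rightarrow> 'b) \<Rightarrow> 'b"
  assumes y: "\<forall>x\<in>span (t ` B). (1 - \<eta>) * (norm x + 1) \<le> norm (x + y)"
    and t: "\<forall>g\<in>B. norm (g s - t g) \<le> \<delta>" and r: "r > 0" and \<eta>: "0 \<le> \<eta>" "\<eta> \<le> 1"
  shows "(1 - \<eta>) * (norm (lin_comb B c s) + r) - 2 * \<delta> * (\<Sum>g\<in>B. \<bar>c g\<bar>)
           \<le> norm (lin_comb B c s + r *\<^sub>R y)"
proof -
  let ?a = "lin_comb B c s" and ?X = "\<Sum>g\<in>B. c g *\<^sub>R t g" and ?e = "(\<Sum>g\<in>B. \<bar>c g\<bar>) * \<delta>"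
  have e: "norm (?a - ?X) \<le> ?e"
    using t by (rule norm_lin_comb_diff_le)
  have "?X \<in> span (t ` B)"
    by (intro span_sum span_mul span_base) auto
  then have X: "(1 - \<eta>) * (norm ?X + r) \<le> norm (?X + r *\<^sub>R y)"
    by (rule octahedral_direction_scaled[OF y _ r])
  have "norm (?X + r *\<^sub>R y) \<le> norm (?a + r *\<^sub>R y) + norm (?a - ?X)"
    using norm_triangle_ineq4[of "?a + r *\<^sub>R y" "?a - ?X"] by (simp add: algebra_simps)
  moreover have "(1 - \<eta>) * norm ?a \<le> (1 - \<eta>) * (norm ?X + ?e)"
    using norm_triangle_ineq[of ?X "?a - ?X"] e \<eta> by (intro mult_left_mono) auto
  moreover have "(1 - \<eta>) * ?e \<le> ?e"
    using order_trans[OF norm_ge_zero e] \<eta> by (intro mult_left_le_one_le) auto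
  ultimately show ?thesis
    using e X by (simp add: algebra_simps)
qed

section \<open>Lebesgue--Bochner spaces\<close>

lemma strongly_measurable_simple_function: "simple_function M f \<Longrightarrow> strongly_measurable M f"
  unfolding strongly_measurable_def by (intro exI[of _ "\<lambda>n. f"]) auto

lemma strongly_measurable_zero: "strongly_measurable M (\<lambda>x. 0)"
  by (rule strongly_measurable_simple_function) simp

lemma strongly_measurable_add:
  assumes "strongly_measurable M f" "strongly_measurable M g"
  shows "strongly_measurable M (\<lambda>x. f x + g x)"
proof -
  obtain s where s: "\<And>n. simple_function M (s n)" "AE x in M. (\<lambda>n. s n x) \<longlonglongrightarrow> f x"
    using assms(1) unfolding strongly_measurable_def by blast
  obtain t where t: "\<And>n. simple_function M (t n)" "AE x in M. (\<lambda>n. t n x) \<longlonglongrightarrow> g x"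
    using assms(2) unfolding strongly_measurable_def by blast
  have "AE x in M. (\<lambda>n. s n x + t n x) \<longlonglongrightarrow> f x + g x"
    using s(2) t(2) by eventually_elim (rule tendsto_add)
  with s(1) t(1) show ?thesis
    unfolding strongly_measurable_def by (intro exI[of _ "\<lambda>n x. s n x + t n x"]) blast
qed

lemma strongly_measurable_scaleR:
  assumes "strongly_measurable M f"
  shows "strongly_measurable M (\<lambda>x. a *\<^sub>R f x)"
proof -
  obtain s where s: "\<And>n. simple_function M (s n)" "AE x in M. (\<lambda>n. s n x) \<longlonglongrightarrow> f x"
    using assms unfolding strongly_measurable_def by blast
  have "AE x in M. (\<lambda>n. a *\<^sub>R s n x) \<longlonglongrightarrow> a *\<^sub>R f x"
    using s(2) by eventually_elim (rule tendsto_scaleR[OF tendsto_const])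
  with simple_function_compose1[OF s(1)] show ?thesis
    unfolding strongly_measurable_def by (intro exI[of _ "\<lambda>n x. a *\<^sub>R s n x"]) blast
qed

lemma borel_measurable_AE_eq_complete:
  fixes f g :: "'a \<Rightarrow> 'x::topological_space"
  assumes "complete_measure M" "g \<in> borel_measurable M" "AE x in M. f x = g x"
  shows "f \<in> borel_measurable M"
proof (rule borel_measurableI)
  fix S :: "'x set"
  assume "open S"
  then have "g -` S \<inter> space M \<in> sets M"
    using assms(2) by (simp add: measurable_sets borel_open)
  moreover have "AE x in M. x \<in> g -` S \<inter> space M \<longleftrightarrow> x \<in> f -` S \<inter> space M"
    using assms(3) AE_space by eventually_elim auto
  ultimately show "f -` S \<inter> space M \<in> sets M"
    using complete_measure.in_sets_AE[OF assms(1)] by blast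
qed

text \<open>X need not be separable, so strongly measurable functions need not be Borel measurable;
  their norms are, as a.e. limits of liminfs of simple functions, thanks to completeness.\<close>
lemma borel_measurable_norm_strongly_measurable:
  assumes "complete_measure M" "strongly_measurable M f"
  shows "(\<lambda>x. norm (f x)) \<in> borel_measurable M"
proof -
  obtain s where s: "\<And>n. simple_function M (s n)" "AE x in M. (\<lambda>n. s n x) \<longlonglongrightarrow> f x"
    using assms(2) unfolding strongly_measurable_def by blast
  define g where "g x = real_of_ereal (liminf (\<lambda>n. ereal (norm (s n x))))" for x
  have "(\<lambda>x. ereal (norm (s n x))) \<in> borel_measurable M" for n
    using borel_measurable_simple_function[OF s(1)[of n]] by measurable
  then have "(\<lambda>x. liminf (\<lambda>n. ereal (norm (s n x)))) \<in> borel_measurable M"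
    by (rule borel_measurable_liminf)
  then have "g \<in> borel_measurable M"
    unfolding g_def by measurable
  moreover have "AE x in M. norm (f x) = g x"
    using s(2)
  proof eventually_elim
    case (elim x)
    then have "(\<lambda>n. ereal (norm (s n x))) \<longlonglongrightarrow> ereal (norm (f x))"
      by (intro tendsto_ereal tendsto_norm)
    then have "liminf (\<lambda>n. ereal (norm (s n x))) = ereal (norm (f x))"
      by (rule lim_imp_Liminf[OF sequentially_bot])
    then show ?case
      by (simp add: g_def)
  qed
  ultimately show ?thesis
    by (rule borel_measurable_AE_eq_complete[OF assms(1)])
qed

lemma L1_norm_integral:
  assumes "complete_measure M" "f \<in> L1_space M"
  shows "integrable M (\<lambda>x. norm (f x))" "L1_norm M f = (\<integral>x. norm (f x) \<partial>M)"
proof -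
  have m: "(\<lambda>x. norm (f x)) \<in> borel_measurable M" "(\<integral>\<^sup>+ x. ennreal (norm (f x)) \<partial>M) < \<infinity>"
    using assms borel_measurable_norm_strongly_measurable unfolding L1_space_def by auto
  show i: "integrable M (\<lambda>x. norm (f x))"
    by (rule integrableI_bounded) (use m in auto)
  have "(\<integral>\<^sup>+ x. ennreal (norm (f x)) \<partial>M) = ennreal (\<integral>x. norm (f x) \<partial>M)"
    by (rule nn_integral_eq_integral[OF i]) auto
  then show "L1_norm M f = (\<integral>x. norm (f x) \<partial>M)"
    unfolding L1_norm_def by simp
qed

lemma seminormed_function_space_L1:
  assumes c: "complete_measure M"
  shows "seminormed_function_space (L1_space M) (L1_norm M)"
proof
  show "(\<lambda>s. 0) \<in> L1_space M"
    unfolding L1_space_def using strongly_measurable_zero by auto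
next
  fix u v :: "'a \<Rightarrow> 'b"
  assume u: "u \<in> L1_space M" and v: "v \<in> L1_space M"
  have "(\<lambda>x. norm (u x)) \<in> borel_measurable M" "(\<lambda>x. norm (v x)) \<in> borel_measurable M"
    using u v borel_measurable_norm_strongly_measurable[OF c] unfolding L1_space_def by auto
  then have "(\<integral>\<^sup>+ x. ennreal (norm (u x)) + ennreal (norm (v x)) \<partial>M)
      = (\<integral>\<^sup>+ x. ennreal (norm (u x)) \<partial>M) + (\<integral>\<^sup>+ x. ennreal (norm (v x)) \<partial>M)"
    by (intro nn_integral_add) auto
  moreover have "(\<integral>\<^sup>+ x. ennreal (norm (u x + v x)) \<partial>M)
      \<le> (\<integral>\<^sup>+ x. ennreal (norm (u x)) + ennreal (norm (v x)) \<partial>M)"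
    by (intro nn_integral_mono) (simp add: norm_triangle_ineq flip: ennreal_plus)
  ultimately have "(\<integral>\<^sup>+ x. ennreal (norm (u x + v x)) \<partial>M) < \<infinity>"
    using u v unfolding L1_space_def by (auto intro: le_less_trans)
  then show uv: "(\<lambda>s. u s + v s) \<in> L1_space M"
    using u v strongly_measurable_add unfolding L1_space_def by auto
  have "(\<integral>x. norm (u x + v x) \<partial>M) \<le> (\<integral>x. norm (u x) + norm (v x) \<partial>M)"
    using L1_norm_integral(1)[OF c uv] L1_norm_integral(1)[OF c u] L1_norm_integral(1)[OF c v]
    by (intro integral_mono) (auto simp: norm_triangle_ineq)
  then show "L1_norm M (\<lambda>s. u s + v s) \<le> L1_norm M u + L1_norm M v"
    using L1_norm_integral[OF c uv] L1_norm_integral[OF c u] L1_norm_integral[OF c v] by simp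
next
  fix u :: "'a \<Rightarrow> 'b" and a :: real
  assume u: "u \<in> L1_space M"
  have "(\<lambda>x. norm (u x)) \<in> borel_measurable M"
    using u borel_measurable_norm_strongly_measurable[OF c] unfolding L1_space_def by auto
  then have "(\<integral>\<^sup>+ x. ennreal (norm (a *\<^sub>R u x)) \<partial>M) = ennreal \<bar>a\<bar> * (\<integral>\<^sup>+ x. ennreal (norm (u x)) \<partial>M)"
    by (simp add: ennreal_mult nn_integral_cmult)
  then have "(\<integral>\<^sup>+ x. ennreal (norm (a *\<^sub>R u x)) \<partial>M) < \<infinity>"
    using u unfolding L1_space_def by (simp add: ennreal_mult_less_top)
  then show us: "(\<lambda>s. a *\<^sub>R u s) \<in> L1_space M"
    using u strongly_measurable_scaleR unfolding L1_space_def by auto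
  show "L1_norm M (\<lambda>s. a *\<^sub>R u s) = \<bar>a\<bar> * L1_norm M u"
    using L1_norm_integral[OF c us] L1_norm_integral[OF c u] by simp
next
  show "L1_norm M u \<ge> 0" for u :: "'a \<Rightarrow> 'b"
    unfolding L1_norm_def by simp
qed

text \<open>The hypothesis on the measure of the space excludes the junk value -\<infinity> of the
  essential supremum on the zero measure.\<close>
lemma Linf_norm_esssup:
  assumes c: "complete_measure M" and ne: "emeasure M (space M) \<noteq> 0" and u: "u \<in> Linf_space M"
  shows "ereal (Linf_norm M u) = esssup M (\<lambda>x. ereal (norm (u x)))" "Linf_norm M u \<ge> 0"
    and "(\<lambda>x. ereal (norm (u x))) \<in> borel_measurable M"
proof -
  have "(\<lambda>x. norm (u x)) \<in> borel_measurable M"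
    using borel_measurable_norm_strongly_measurable[OF c] u unfolding Linf_space_def by blast
  then show "(\<lambda>x. ereal (norm (u x))) \<in> borel_measurable M"
    by measurable
  have "esssup M (\<lambda>x. ereal 0) \<le> esssup M (\<lambda>x. ereal (norm (u x)))"
    by (rule esssup_mono) auto
  then have "0 \<le> esssup M (\<lambda>x. ereal (norm (u x)))"
    using esssup_const[OF ne, of "0::ereal"] by (simp add: zero_ereal_def)
  moreover have "esssup M (\<lambda>x. ereal (norm (u x))) < \<infinity>"
    using u unfolding Linf_space_def by auto
  ultimately show "ereal (Linf_norm M u) = esssup M (\<lambda>x. ereal (norm (u x)))" "Linf_norm M u \<ge> 0"
    unfolding Linf_norm_def by (auto simp: ereal_real real_of_ereal_pos)
qed

lemma seminormed_function_space_Linf: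
  assumes c: "complete_measure M" and ne: "emeasure M (space M) \<noteq> 0"
  shows "seminormed_function_space (Linf_space M) (Linf_norm M)"
proof
  have "esssup M (\<lambda>x. ereal (norm (0::'b))) = 0"
    using esssup_const[OF ne, of "0::ereal"] by (simp add: zero_ereal_def)
  then show "(\<lambda>s. 0) \<in> Linf_space M"
    unfolding Linf_space_def using strongly_measurable_zero by auto
next
  fix u v :: "'a \<Rightarrow> 'b"
  assume u: "u \<in> Linf_space M" and v: "v \<in> Linf_space M"
  have "(\<lambda>x. norm (u x + v x)) \<in> borel_measurable M"
    using borel_measurable_norm_strongly_measurable[OF c strongly_measurable_add] u v
    unfolding Linf_space_def by auto
  then have "esssup M (\<lambda>x. ereal (norm (u x + v x)))
      \<le> esssup M (\<lambda>x. ereal (norm (u x)) + ereal (norm (v x)))"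
    by (intro esssup_mono) (auto simp: norm_triangle_ineq)
  also have "\<dots> \<le> esssup M (\<lambda>x. ereal (norm (u x))) + esssup M (\<lambda>x. ereal (norm (v x)))"
    by (rule esssup_add)
  also have "\<dots> = ereal (Linf_norm M u + Linf_norm M v)"
    by (simp flip: Linf_norm_esssup(1)[OF c ne u] Linf_norm_esssup(1)[OF c ne v])
  finally have sum: "esssup M (\<lambda>x. ereal (norm (u x + v x))) \<le> ereal (Linf_norm M u + Linf_norm M v)" .
  then show uv: "(\<lambda>s. u s + v s) \<in> Linf_space M"
    using u v strongly_measurable_add unfolding Linf_space_def by (auto intro: le_less_trans)
  show "Linf_norm M (\<lambda>s. u s + v s) \<le> Linf_norm M u + Linf_norm M v"
    using sum by (simp flip: Linf_norm_esssup(1)[OF c ne uv])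
next
  fix u :: "'a \<Rightarrow> 'b" and a :: real
  assume u: "u \<in> Linf_space M"
  have scaled: "esssup M (\<lambda>x. ereal (norm (a *\<^sub>R u x))) = ereal (\<bar>a\<bar> * Linf_norm M u)"
  proof (cases "a = 0")
    case True
    then show ?thesis
      using esssup_const[OF ne, of "0::ereal"] by (simp add: zero_ereal_def)
  next
    case False
    have "esssup M (\<lambda>x. ereal (norm (a *\<^sub>R u x))) = esssup M (\<lambda>x. ereal \<bar>a\<bar> * ereal (norm (u x)))"
      by simp
    also have "\<dots> = ereal \<bar>a\<bar> * esssup M (\<lambda>x. ereal (norm (u x)))"
      by (rule esssup_cmult) (use False in simp)
    finally show ?thesis
      by (simp flip: Linf_norm_esssup(1)[OF c ne u])
  qed
  then show us: "(\<lambda>s. a *\<^sub>R u s) \<in> Linf_space M"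
    using u strongly_measurable_scaleR unfolding Linf_space_def by auto
  show "Linf_norm M (\<lambda>s. a *\<^sub>R u s) = \<bar>a\<bar> * Linf_norm M u"
    using scaled Linf_norm_esssup(1)[OF c ne us] by simp
next
  show "Linf_norm M u \<ge> 0" if "u \<in> Linf_space M" for u :: "'a \<Rightarrow> 'b"
    using Linf_norm_esssup(2)[OF c ne that] .
qed

section \<open>Countably-valued approximation\<close>

lemma simple_function_restrict_family:
  assumes "finite B" "\<And>g. g \<in> B \<Longrightarrow> simple_function M (F g)"
  shows "simple_function M (\<lambda>x. \<lambda>g. if g \<in> B then F g x else 0)"
  using assms
proof (induction B rule: finite_induct)
  case (insert h B)
  have "(\<lambda>x. \<lambda>g. if g \<in> insert h B then F g x else 0)
      = (\<lambda>x. (\<lambda>t v. t(h := v)) (\<lambda>g. if g \<in> B then F g x else 0) (F h x))"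
    by (auto simp: fun_eq_iff)
  then show ?case
    using simple_function_compose2[of M "\<lambda>x. \<lambda>g. if g \<in> B then F g x else 0" "F h" "\<lambda>t v. t(h := v)"] insert
    by simp
qed simp

lemma obtain_measurable_index:
  assumes E: "\<And>n. E n \<in> sets M" and cover: "AE x in M. \<exists>n. x \<in> E n"
  obtains nx :: "'a \<Rightarrow> nat"
  where "\<And>k. {x\<in>space M. nx x = k} \<in> sets M" "AE x in M. x \<in> E (nx x)"
proof -
  define F where "F n = E n \<union> (space M - (\<Union>j. E j))" for n
  have F: "F n \<in> sets M" for n
    unfolding F_def using E by auto
  define nx where "nx x = (LEAST n. x \<in> F n)" for x
  have nx_iff: "nx x = k \<longleftrightarrow> x \<in> F k \<and> (\<forall>j<k. x \<notin> F j)" if "x \<in> space M" for x k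
  proof
    have "\<exists>n. x \<in> F n"
      using that unfolding F_def by blast
    then show "x \<in> F k \<and> (\<forall>j<k. x \<notin> F j)" if "nx x = k"
      using that LeastI_ex not_less_Least unfolding nx_def by metis
  next
    show "nx x = k" if "x \<in> F k \<and> (\<forall>j<k. x \<notin> F j)"
      unfolding nx_def by (rule Least_equality) (use that in \<open>auto simp: not_less[symmetric]\<close>)
  qed
  have "{x\<in>space M. nx x = k} = (F k \<inter> space M) - (\<Union>j<k. F j)" for k
    using nx_iff by auto
  then have "{x\<in>space M. nx x = k} \<in> sets M" for k
    using F by auto
  moreover have "AE x in M. x \<in> E (nx x)"
    using cover AE_space
  proof eventually_elim
    case (elim x)
    then have "x \<in> F (nx x)"
      using nx_iff by blast
    with elim show ?case
      unfolding F_def by blast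
  qed
  ultimately show ?thesis
    using that by blast
qed

lemma strongly_measurable_countable_approx:
  fixes B :: "('a \<Rightarrow> 'b::real_normed_vector) set"
  assumes B: "finite B" and sm: "\<And>g. g \<in> B \<Longrightarrow> strongly_measurable M g" and \<delta>: "\<delta> > 0"
  obtains T :: "nat \<Rightarrow> 'a \<Rightarrow> ('a \<Rightarrow> 'b) \<Rightarrow> 'b" and nx :: "'a \<Rightarrow> nat"
  where "\<And>k. simple_function M (T k)" "\<And>k. {x\<in>space M. nx x = k} \<in> sets M"
    "AE x in M. \<forall>g\<in>B. norm (g x - T (nx x) x g) \<le> \<delta>"
proof -
  obtain sq where sq: "\<And>g n. g \<in> B \<Longrightarrow> simple_function M (sq g n)"
    "\<And>g. g \<in> B \<Longrightarrow> AE x in M. (\<lambda>n. sq g n x) \<longlonglongrightarrow> g x"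
    using sm unfolding strongly_measurable_def by metis
  define T where "T n x = (\<lambda>g. if g \<in> B then sq g n x else 0)" for n x
  have T: "simple_function M (T k)" for k
    unfolding T_def by (rule simple_function_restrict_family[OF B]) (use sq in auto)
  have lim: "AE x in M. \<forall>g\<in>B. (\<lambda>n. sq g n x) \<longlonglongrightarrow> g x"
    by (rule AE_finite_allI[OF B]) (rule sq(2))
  define E where "E n = {x\<in>space M. \<forall>g\<in>B. \<forall>m\<ge>n. dist (sq g m x) (sq g n x) \<le> \<delta>}" for n
  have E_sets: "E n \<in> sets M" for n
    unfolding E_def
  proof (rule sets.sets_Collect_countable_All'[OF _ countable_finite[OF B]])
    fix g assume g: "g \<in> B"
    show "{x \<in> space M. \<forall>m\<ge>n. dist (sq g m x) (sq g n x) \<le> \<delta>} \<in> sets M"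
    proof (rule sets.sets_Collect_countable_All)
      fix m
      have "(\<lambda>x. dist (sq g m x) (sq g n x)) \<in> borel_measurable M"
        by (rule borel_measurable_simple_function, rule simple_function_compose2[OF sq(1)[OF g] sq(1)[OF g]])
      then have "{x \<in> space M. dist (sq g m x) (sq g n x) \<le> \<delta>} \<in> sets M"
        by measurable
      then show "{x \<in> space M. n \<le> m \<longrightarrow> dist (sq g m x) (sq g n x) \<le> \<delta>} \<in> sets M"
        by (cases "n \<le> m") auto
    qed
  qed
  have E_cover: "AE x in M. \<exists>n. x \<in> E n"
    using lim AE_space
  proof eventually_elim
    case (elim x)
    have "\<forall>\<^sub>F n in sequentially. \<forall>g\<in>B. \<forall>m\<ge>n. dist (sq g m x) (sq g n x) \<le> \<delta>"
    proof (rule eventually_ball_finite[OF B], intro ballI)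
      fix g assume "g \<in> B"
      then have "Cauchy (\<lambda>n. sq g n x)"
        using elim by (auto intro: LIMSEQ_imp_Cauchy)
      then obtain M0 where "\<And>m n. m \<ge> M0 \<Longrightarrow> n \<ge> M0 \<Longrightarrow> dist (sq g m x) (sq g n x) < \<delta>"
        using \<delta> unfolding Cauchy_def by blast
      then show "\<forall>\<^sub>F n in sequentially. \<forall>m\<ge>n. dist (sq g m x) (sq g n x) \<le> \<delta>"
        unfolding eventually_sequentially by (meson less_imp_le order_trans)
    qed
    then show ?case
      using elim unfolding E_def eventually_sequentially by blast
  qed
  obtain nx where nx: "\<And>k. {x\<in>space M. nx x = k} \<in> sets M" "AE x in M. x \<in> E (nx x)"
    using obtain_measurable_index[OF E_sets E_cover] by blast
  have "AE x in M. \<forall>g\<in>B. norm (g x - T (nx x) x g) \<le> \<delta>"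
    using nx(2) lim
  proof eventually_elim
    case (elim x)
    show ?case
    proof
      fix g assume g: "g \<in> B"
      have "(\<lambda>m. dist (sq g m x) (sq g (nx x) x)) \<longlonglongrightarrow> dist (g x) (sq g (nx x) x)"
        using elim g by (intro tendsto_dist tendsto_const) auto
      moreover have "\<forall>\<^sub>F m in sequentially. dist (sq g m x) (sq g (nx x) x) \<le> \<delta>"
        using elim(1) g unfolding E_def eventually_sequentially by blast
      ultimately have "dist (g x) (sq g (nx x) x) \<le> \<delta>"
        by (rule tendsto_upperbound) simp
      then show "norm (g x - T (nx x) x g) \<le> \<delta>"
        using g unfolding T_def by (simp add: dist_norm)
    qed
  qed
  with T nx(1) that show ?thesis
    by blast
qed

lemma strongly_measurable_piecewise_simple:
  fixes nx :: "'a \<Rightarrow> nat"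
  assumes T: "\<And>k. simple_function M (T k)" and nx: "\<And>k. {x\<in>space M. nx x = k} \<in> sets M"
  shows "strongly_measurable M (\<lambda>x. \<Phi> (T (nx x) x))"
  unfolding strongly_measurable_def
proof (intro exI[of _ "\<lambda>n x. \<Phi> (T (min (nx x) n) x)"] conjI allI)
  fix n
  show "simple_function M (\<lambda>x. \<Phi> (T (min (nx x) n) x))"
  proof (induction n)
    case 0
    then show ?case
      using simple_function_compose1[OF T[of 0]] by simp
  next
    case (Suc n)
    have "(\<lambda>x. \<Phi> (T (min (nx x) (Suc n)) x))
        = (\<lambda>x. if nx x \<le> n then \<Phi> (T (min (nx x) n) x) else \<Phi> (T (Suc n) x))"
      by (auto simp: fun_eq_iff min_def le_Suc_eq)
    moreover have "{x\<in>space M. nx x \<le> n} = (\<Union>k\<in>{..n}. {x\<in>space M. nx x = k})"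
      by auto
    then have "{x\<in>space M. nx x \<le> n} \<in> sets M"
      using nx by auto
    ultimately show ?case
      using simple_function_If[OF Suc simple_function_compose1[OF T]] by simp
  qed
next
  show "AE x in M. (\<lambda>n. \<Phi> (T (min (nx x) n) x)) \<longlonglongrightarrow> \<Phi> (T (nx x) x)"
  proof (rule AE_I2, rule tendsto_eventually)
    fix x
    show "\<forall>\<^sub>F n in sequentially. \<Phi> (T (min (nx x) n) x) = \<Phi> (T (nx x) x)"
      using eventually_ge_at_top[of "nx x"] by eventually_elim (simp add: min_def)
  qed
qed

lemma AE_ex_in_positive_measure:
  assumes "AE x in M. P x" "emeasure M {x\<in>space M. Q x} > 0"
  shows "\<exists>x\<in>space M. P x \<and> Q x"
proof (rule ccontr)
  assume "\<not> ?thesis"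
  then have "{x\<in>space M. Q x} \<subseteq> {x\<in>space M. \<not> P x}"
    by auto
  moreover obtain N where "{x \<in> space M. \<not> P x} \<subseteq> N" "N \<in> sets M" "emeasure M N = 0"
    using assms(1) by (rule AE_E)
  ultimately have "emeasure M {x\<in>space M. Q x} \<le> 0"
    using emeasure_mono[of "{x\<in>space M. Q x}" N M] by auto
  with assms(2) show False
    by simp
qed

lemma Linf_norm_lower_bound_AE:
  assumes c: "complete_measure M" and ne: "emeasure M (space M) \<noteq> 0"
    and f: "f \<in> Linf_space M" and u: "u \<in> Linf_space M" and a: "a \<ge> 0"
    and bound: "AE x in M. a * norm (f x) + b \<le> norm (u x)"
  shows "a * Linf_norm M f + b \<le> Linf_norm M u"
proof (rule field_le_epsilon)
  fix \<eta> :: real assume \<eta>: "\<eta> > 0"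
  let ?\<eta>' = "\<eta> / (a + 1)"
  have "Linf_norm M f - ?\<eta>' < Linf_norm M f"
    using \<eta> a by simp
  then have "ereal (Linf_norm M f - ?\<eta>') < esssup M (\<lambda>x. ereal (norm (f x)))"
    by (simp flip: Linf_norm_esssup(1)[OF c ne f])
  then have "emeasure M {x\<in>space M. ereal (Linf_norm M f - ?\<eta>') < ereal (norm (f x))} > 0"
    using Linf_norm_esssup(3)[OF c ne f] by (rule esssup_pos_measure[rotated])
  moreover have "AE x in M. ereal (norm (u x)) \<le> esssup M (\<lambda>x. ereal (norm (u x)))"
    by (rule esssup_AE)
  ultimately obtain x where x: "a * norm (f x) + b \<le> norm (u x)"
    "ereal (norm (u x)) \<le> ereal (Linf_norm M u)" "Linf_norm M f - ?\<eta>' < norm (f x)"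
    using AE_ex_in_positive_measure[OF eventually_conj[OF bound]] Linf_norm_esssup(1)[OF c ne u]
    by fastforce
  have "a * (Linf_norm M f - ?\<eta>') \<le> a * norm (f x)"
    using x(3) a by (intro mult_left_mono) auto
  moreover have "a * ?\<eta>' \<le> \<eta>"
    using a \<eta> by (simp add: field_simps)
  ultimately show "a * Linf_norm M f + b \<le> Linf_norm M u + \<eta>"
    using x(1,2) by (simp add: algebra_simps)
qed

lemma Linf_approximately_octahedral:
  fixes M :: "'a measure"
  assumes c: "complete_measure M" and ne: "emeasure M (space M) \<noteq> 0"
    and oct: "octahedral TYPE('b::banach)"
    and B: "finite B" "B \<subseteq> (Linf_space M :: ('a \<Rightarrow> 'b) set)" and \<epsilon>: "0 < \<epsilon>" "\<epsilon> \<le> 1"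
  shows "\<exists>y\<in>Linf_space M. Linf_norm M y = 1 \<and>
           (\<forall>c. (1 - \<epsilon>) * (Linf_norm M (lin_comb B c) + 1) - \<epsilon> * (\<Sum>g\<in>B. \<bar>c g\<bar>)
                  \<le> Linf_norm M (\<lambda>s. lin_comb B c s + y s))"
proof -
  interpret seminormed_function_space "Linf_space M :: ('a \<Rightarrow> 'b) set" "Linf_norm M"
    by (rule seminormed_function_space_Linf[OF c ne])
  have "\<And>g. g \<in> B \<Longrightarrow> strongly_measurable M g"
    using B(2) unfolding Linf_space_def by blast
  then obtain T and nx :: "'a \<Rightarrow> nat" where T: "\<And>k. simple_function M (T k)"
    "\<And>k. {x\<in>space M. nx x = k} \<in> sets M" "AE x in M. \<forall>g\<in>B. norm (g x - T (nx x) x g) \<le> \<epsilon> / 2"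
    using strongly_measurable_countable_approx[OF B(1) _ half_gt_zero[OF \<epsilon>(1)]] by blast
  define Y where "Y t = (SOME y. norm y = 1 \<and> (\<forall>x\<in>span (t ` B). (1 - \<epsilon>) * (norm x + 1) \<le> norm (x + y)))"
    for t :: "('a \<Rightarrow> 'b) \<Rightarrow> 'b"
  have Y: "norm (Y t) = 1 \<and> (\<forall>x\<in>span (t ` B). (1 - \<epsilon>) * (norm x + 1) \<le> norm (x + Y t))" for t
    unfolding Y_def by (rule someI_ex) (meson octahedralD[OF oct finite_imageI[OF B(1)] \<epsilon>(1)])
  define y where "y x = Y (T (nx x) x)" for x
  have "esssup M (\<lambda>x. ereal (norm (y x))) = 1"
    using esssup_const[OF ne, of "1::ereal"] Y by (simp add: y_def one_ereal_def)
  moreover have "strongly_measurable M y"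
    unfolding y_def by (rule strongly_measurable_piecewise_simple[OF T(1,2)])
  ultimately have y: "y \<in> Linf_space M" "Linf_norm M y = 1"
    unfolding Linf_space_def Linf_norm_def by simp_all
  have "(1 - \<epsilon>) * (Linf_norm M (lin_comb B c) + 1) - \<epsilon> * (\<Sum>g\<in>B. \<bar>c g\<bar>)
          \<le> Linf_norm M (\<lambda>s. lin_comb B c s + y s)" for c
  proof -
    have "AE x in M. (1 - \<epsilon>) * norm (lin_comb B c x) + ((1 - \<epsilon>) - \<epsilon> * (\<Sum>g\<in>B. \<bar>c g\<bar>))
                       \<le> norm (lin_comb B c x + y x)"
      using T(3)
    proof eventually_elim
      case (elim x)
      show ?case
        using norm_lin_comb_add_octahedral[of "T (nx x) x" B \<epsilon> "Y (T (nx x) x)" x "\<epsilon> / 2" 1 c] Y elim \<epsilon>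
        by (simp add: y_def algebra_simps)
    qed
    then have "(1 - \<epsilon>) * Linf_norm M (lin_comb B c) + ((1 - \<epsilon>) - \<epsilon> * (\<Sum>g\<in>B. \<bar>c g\<bar>))
                 \<le> Linf_norm M (\<lambda>s. lin_comb B c s + y s)"
      using \<epsilon> by (intro Linf_norm_lower_bound_AE[OF c ne lin_comb_mem[OF B] add_mem[OF lin_comb_mem[OF B] y(1)]]) simp_all
    then show ?thesis
      by (simp add: algebra_simps)
  qed
  with y show ?thesis
    by blast
qed

lemma (in sigma_finite_measure) obtain_positive_finite_set:
  assumes "emeasure M (space M) \<noteq> 0"
  obtains W where "W \<in> sets M" "0 < emeasure M W" "emeasure M W < \<infinity>"
proof -
  obtain A :: "nat \<Rightarrow> 'a set"
    where A: "range A \<subseteq> sets M" "(\<Union>i. A i) = space M" "\<And>i. emeasure M (A i) \<noteq> \<infinity>"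
    using sigma_finite by blast
  have "\<exists>i. 0 < emeasure M (A i)"
  proof (rule ccontr)
    assume "\<not> ?thesis"
    then have "A i \<in> null_sets M" for i
      using A(1) by (auto simp: null_sets_def not_gr_zero)
    then have "(\<Union>i. A i) \<in> null_sets M"
      by (rule null_sets_UN)
    with assms A(2) show False
      by (simp add: null_sets_def)
  qed
  then obtain i where "0 < emeasure M (A i)"
    by blast
  moreover have "A i \<in> sets M"
    using A(1) by blast
  ultimately show ?thesis
    using A(3)[of i] that[of "A i"] by (simp add: less_top)
qed

lemma obtain_positive_level_set:
  fixes nx :: "'a \<Rightarrow> 'k::countable"
  assumes T: "\<And>k. simple_function M (T k)" and nx: "\<And>k. {x\<in>space M. nx x = k} \<in> sets M"
    and W: "W \<in> sets M" "0 < emeasure M W"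
  obtains k t where "{x\<in>W. nx x = k \<and> T k x = t} \<in> sets M" "0 < emeasure M {x\<in>W. nx x = k \<and> T k x = t}"
proof -
  define P where "P k t = {x\<in>W. nx x = k \<and> T k x = t}" for k t
  have P: "P k t \<in> sets M" for k t
  proof -
    have "P k t = {x\<in>space M. nx x = k} \<inter> (T k -` {t} \<inter> space M) \<inter> W"
      using sets.sets_into_space[OF W(1)] by (auto simp: P_def)
    then show ?thesis
      using measurable_sets[OF measurable_simple_function[OF T], of "{t}"] nx W(1) by auto
  qed
  have "\<exists>k t. 0 < emeasure M (P k t)"
  proof (rule ccontr)
    assume "\<not> ?thesis"
    then have null: "P k t \<in> null_sets M" for k t
      using P by (simp add: null_sets_def)
    have "(\<Union>t\<in>T k ` space M. P k t) \<in> null_sets M" for k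
      by (rule null_sets_UN'[OF countable_finite[OF simple_functionD(1)[OF T]] null])
    then have "(\<Union>k. \<Union>t\<in>T k ` space M. P k t) \<in> null_sets M"
      by (rule null_sets_UN)
    moreover have "W \<subseteq> (\<Union>k. \<Union>t\<in>T k ` space M. P k t)"
    proof
      fix x assume "x \<in> W"
      then have "x \<in> space M" "x \<in> P (nx x) (T (nx x) x)"
        using sets.sets_into_space[OF W(1)] by (auto simp: P_def)
      then show "x \<in> (\<Union>k. \<Union>t\<in>T k ` space M. P k t)"
        by blast
    qed
    ultimately have "W \<in> null_sets M"
      by (rule null_sets_subset[OF _ W(1)])
    with W(2) show False
      by (simp add: null_sets_def)
  qed
  then obtain k t where "0 < emeasure M (P k t)"
    by blast
  with P[of k t] that[of k t] show ?thesis
    by (simp add: P_def)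
qed

lemma L1_approximately_octahedral:
  fixes M :: "'a measure"
  assumes c: "complete_measure M" and sf: "sigma_finite_measure M" and ne: "emeasure M (space M) \<noteq> 0"
    and oct: "octahedral TYPE('b::banach)"
    and B: "finite B" "B \<subseteq> (L1_space M :: ('a \<Rightarrow> 'b) set)" and \<epsilon>: "0 < \<epsilon>" "\<epsilon> \<le> 1"
  shows "\<exists>y\<in>L1_space M. L1_norm M y = 1 \<and>
           (\<forall>c. (1 - \<epsilon>) * (L1_norm M (lin_comb B c) + 1) - \<epsilon> * (\<Sum>g\<in>B. \<bar>c g\<bar>)
                  \<le> L1_norm M (\<lambda>s. lin_comb B c s + y s))"
proof -
  interpret seminormed_function_space "L1_space M :: ('a \<Rightarrow> 'b) set" "L1_norm M"
    by (rule seminormed_function_space_L1[OF c])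
  obtain W where W: "W \<in> sets M" "0 < emeasure M W" "emeasure M W < \<infinity>"
    using sigma_finite_measure.obtain_positive_finite_set[OF sf ne] by blast
  define \<delta> where "\<delta> = \<epsilon> / (2 * (measure M W + 1))"
  have \<delta>: "\<delta> > 0"
    using \<epsilon> by (simp add: \<delta>_def add_nonneg_pos)
  have "\<And>g. g \<in> B \<Longrightarrow> strongly_measurable M g"
    using B(2) unfolding L1_space_def by blast
  then obtain T and nx :: "'a \<Rightarrow> nat" where T: "\<And>k. simple_function M (T k)"
    "\<And>k. {x\<in>space M. nx x = k} \<in> sets M" "AE x in M. \<forall>g\<in>B. norm (g x - T (nx x) x g) \<le> \<delta>"
    using strongly_measurable_countable_approx[OF B(1) _ \<delta>] by blast
  obtain k t where A: "{x\<in>W. nx x = k \<and> T k x = t} \<in> sets M" "0 < emeasure M {x\<in>W. nx x = k \<and> T k x = t}"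
    by (rule obtain_positive_level_set[OF T(1,2) W(1,2)])
  define A where "A = {x\<in>W. nx x = k \<and> T k x = t}"
  have A_sets: "A \<in> sets M" and A_W: "A \<subseteq> W"
    using A(1) by (auto simp: A_def)
  have A_le_W: "emeasure M A \<le> emeasure M W"
    using A_W W(1) by (rule emeasure_mono)
  then have A_fin: "emeasure M A < \<infinity>"
    using W(3) by (rule le_less_trans)
  define mA where "mA = measure M A"
  have "emeasure M A = ennreal mA" "emeasure M W = ennreal (measure M W)"
    using A_fin W(3) by (simp_all add: mA_def emeasure_eq_ennreal_measure)
  then have mA: "0 < mA" "mA \<le> measure M W"
    using A(2) A_le_W by (simp_all add: A_def)
  obtain y0 :: 'b where y0: "norm y0 = 1" "\<forall>x\<in>span (t ` B). (1 - \<epsilon>) * (norm x + 1) \<le> norm (x + y0)"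
    using octahedralD[OF oct finite_imageI[OF B(1)] \<epsilon>(1)] by blast
  define y where "y x = indicator A x *\<^sub>R ((1 / mA) *\<^sub>R y0)" for x
  have int_A: "integrable M (indicator A :: 'a \<Rightarrow> real)" "(\<integral>x. indicator A x \<partial>M) = mA"
    using A_sets A_fin by (simp_all add: mA_def)
  have norm_y: "norm (y x) = indicator A x * (1 / mA)" for x
    using y0(1) mA(1) by (simp add: y_def indicator_def)
  have "integrable M (\<lambda>x. norm (y x))"
    using int_A(1) unfolding norm_y by simp
  then have "(\<integral>\<^sup>+ x. ennreal (norm (norm (y x))) \<partial>M) < \<infinity>"
    unfolding integrable_iff_bounded by blast
  moreover have "strongly_measurable M y"
    unfolding y_def by (intro strongly_measurable_simple_function simple_function_compose1[OF simple_function_indicator[OF A_sets]])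
  ultimately have y: "y \<in> L1_space M"
    unfolding L1_space_def by simp
  have "L1_norm M y = 1"
    using L1_norm_integral(2)[OF c y] int_A mA(1) unfolding norm_y by simp
  moreover have "(1 - \<epsilon>) * (L1_norm M (lin_comb B c) + 1) - \<epsilon> * (\<Sum>g\<in>B. \<bar>c g\<bar>)
                   \<le> L1_norm M (\<lambda>s. lin_comb B c s + y s)" for c
  proof -
    let ?f = "lin_comb B c" and ?S = "\<Sum>g\<in>B. \<bar>c g\<bar>"
    define C where "C = (1 - \<epsilon>) / mA - 2 * \<delta> * ?S"
    have f: "?f \<in> L1_space M"
      by (rule lin_comb_mem[OF B])
    have fy: "(\<lambda>s. ?f s + y s) \<in> L1_space M"
      by (rule add_mem[OF f y])
    have "AE x in M. (1 - \<epsilon>) * norm (?f x) + indicator A x * C \<le> norm (?f x + y x)"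
      using T(3)
    proof eventually_elim
      case (elim x)
      show ?case
      proof (cases "x \<in> A")
        case True
        then have "T (nx x) x = t"
          by (simp add: A_def)
        then have "(1 - \<epsilon>) * (norm (?f x) + 1 / mA) - 2 * \<delta> * ?S \<le> norm (?f x + (1 / mA) *\<^sub>R y0)"
          using norm_lin_comb_add_octahedral[OF y0(2), of x \<delta> "1 / mA" c] elim \<epsilon> mA(1) by simp
        moreover have "(1 - \<epsilon>) * (norm (?f x) + 1 / mA) - 2 * \<delta> * ?S = (1 - \<epsilon>) * norm (?f x) + C"
          by (simp add: C_def algebra_simps)
        ultimately show ?thesis
          using True by (simp add: y_def)
      next
        case False
        have "(1 - \<epsilon>) * norm (?f x) \<le> norm (?f x)"
          using \<epsilon> by (intro mult_left_le_one_le) auto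
        with False show ?thesis
          by (simp add: y_def)
      qed
    qed
    then have "(\<integral>x. (1 - \<epsilon>) * norm (?f x) + indicator A x * C \<partial>M) \<le> (\<integral>x. norm (?f x + y x) \<partial>M)"
      using L1_norm_integral(1)[OF c f] L1_norm_integral(1)[OF c fy] int_A(1)
      by (intro integral_mono_AE) auto
    then have "(1 - \<epsilon>) * L1_norm M ?f + mA * C \<le> L1_norm M (\<lambda>s. ?f s + y s)"
      using L1_norm_integral[OF c f] L1_norm_integral(2)[OF c fy] int_A by simp
    moreover have "2 * \<delta> * mA \<le> \<epsilon>"
    proof -
      have "\<epsilon> * mA \<le> \<epsilon> * (measure M W + 1)"
        using mA \<epsilon> by (intro mult_left_mono) auto
      moreover have "measure M W + 1 > 0"
        by (simp add: add_nonneg_pos)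
      ultimately show ?thesis
        by (simp add: \<delta>_def field_simps)
    qed
    then have "(2 * \<delta> * mA) * ?S \<le> \<epsilon> * ?S"
      by (rule mult_right_mono) (simp add: sum_nonneg)
    moreover have "mA * C = (1 - \<epsilon>) - (2 * \<delta> * mA) * ?S"
      using mA(1) by (simp add: C_def field_simps)
    ultimately show ?thesis
      by (simp add: algebra_simps)
  qed
  ultimately show ?thesis
    using y by blast
qed

theorem proposition4p2:
  fixes M :: "'a measure"
  assumes "complete_measure M"
    and "sigma_finite_measure M"
    and "emeasure M (space M) \<noteq> 0"
    and "octahedral TYPE('b::banach)"
  shows "octahedral_fs (L1_space M :: ('a \<Rightarrow> 'b) set) (L1_norm M) \<and>
         octahedral_fs (Linf_space M :: ('a \<Rightarrow> 'b) set) (Linf_norm M)"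
proof
  interpret L1: seminormed_function_space "L1_space M :: ('a \<Rightarrow> 'b) set" "L1_norm M"
    by (rule seminormed_function_space_L1[OF assms(1)])
  show "octahedral_fs (L1_space M :: ('a \<Rightarrow> 'b) set) (L1_norm M)"
    by (rule L1.octahedral_fs_if_approximately_octahedral, rule L1_approximately_octahedral[OF assms])
next
  interpret Linf: seminormed_function_space "Linf_space M :: ('a \<Rightarrow> 'b) set" "Linf_norm M"
    by (rule seminormed_function_space_Linf[OF assms(1,3)])
  show "octahedral_fs (Linf_space M :: ('a \<Rightarrow> 'b) set) (Linf_norm M)"
    by (rule Linf.octahedral_fs_if_approximately_octahedral, rule Linf_approximately_octahedral[OF assms(1,3,4)])
qed

end
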